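(* Let $\frac12\le\alpha\le1$ and let $M\in\mathcal{M}^*_{\mathcal{L}}(\alpha)$ be a Latin array of order $n$. If $M$ is not focused, then there exists a cell $(i,j)$ such that $M_{ij}$ is a clone and $|R_i(M)\cup C_j(M)|\ge(\alpha+1)n-1$.
   Context: An array of order $n$ is an $n\times n$ array with a symbol in each cell; an entry is a triple $(i,j,A_{ij})$. An array is Latin if no symbol appears more than once in any row or column; $\mathcal{L}$ denotes the class of all square Latin arrays. A transversal of an $m\times m$ array is a set of $m$ entries, no two agreeing in row, column, or symbol; an array is transversal-free if it has no transversal. A symbol is a singleton if it occurs exactly once in the array and a clone otherwise; $M_{ij}$ is called a singleton/clone according to the symbol in cell $(i,j)$. $R_i(M)$, $C_j(M)$ are the sets of symbols in row $i$ and column $j$. $A(i\mid j)$ is the array obtained by deleting row $i$ and column $j$, and $\Psi_{ij}(A)$ is the set of symbols appearing in $A$ but not in $A(i\mid j)$. A Latin array $L$ of order $n$ is focused if every singleton of $L$ occurs in a row or a column of $L$ that contains only singletons, and $|\Psi_{ij}(L)|=2n-1$ for some $(i,j)$. For $\frac12\le\alpha\le1$, $\mathcal{M}_{\mathcal{L}}(\alpha)$ is the set of transversal-free arrays in $\mathcal{L}$ whose number of distinct symbols is at least $\alpha$ times the number of cells, and $\mathcal{M}^*_{\mathcal{L}}(\alpha)$ consists of those $A\in\mathcal{M}_{\mathcal{L}}(\alpha)$ such that no array in $\mathcal{M}_{\mathcal{L}}(\alpha)$ has smaller order than $A$, and no array in $\mathcal{M}_{\mathcal{L}}(\alpha)$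 of the same order as $A$ has more distinct symbols than $A$. *)

theory Defs
  imports Main Complex_Main
begin

text \<open>An array of order n is a function A :: nat => nat => nat; only the cells
 (i,j) with i < n and j < n are relevant. Symbols are natural numbers.\<close>

type_synonym array = "nat \<Rightarrow> nat \<Rightarrow> nat"

definition cells :: "nat \<Rightarrow> (nat \<times> nat) set" where
  "cells n = {0..<n} \<times> {0..<n}"

definition symbols :: "nat \<Rightarrow> array \<Rightarrow> nat set" where
  "symbols n A = {A i j | i j. i < n \<and> j < n}"

definition latin :: "nat \<Rightarrow> array \<Rightarrow> bool" where
  "latin n A \<longleftrightarrow>
     (\<forall>i<n. \<forall>j<n. \<forall>j'<n. j \<noteq> j' \<longrightarrow> A i j \<noteq> A i j') \<and>
     (\<forall>j<n. \<forall>i<n. \<forall>i'<n. i \<noteq> i' \<longrightarrow> A i j \<noteq> A i' j)"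

definition is_transversal :: "nat \<Rightarrow> array \<Rightarrow> (nat \<times> nat) set \<Rightarrow> bool" where
  "is_transversal n A T \<longleftrightarrow> T \<subseteq> cells n \<and> card T = n \<and>
     (\<forall>(i,j)\<in>T. \<forall>(k,l)\<in>T. (i,j) \<noteq> (k,l) \<longrightarrow> i \<noteq> k \<and> j \<noteq> l \<and> A i j \<noteq> A k l)"

definition transversal_free :: "nat \<Rightarrow> array \<Rightarrow> bool" where
  "transversal_free n A \<longleftrightarrow> \<not> (\<exists>T. is_transversal n A T)"

definition occurrences :: "nat \<Rightarrow> array \<Rightarrow> nat \<Rightarrow> nat" where
  "occurrences n A s = card {(i,j) \<in> cells n. A i j = s}"

definition is_singleton :: "nat \<Rightarrow> array \<Rightarrow> nat \<Rightarrow> bool" where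
  "is_singleton n A s \<longleftrightarrow> occurrences n A s = 1"

definition is_clone :: "nat \<Rightarrow> array \<Rightarrow> nat \<Rightarrow> bool" where
  "is_clone n A s \<longleftrightarrow> occurrences n A s \<ge> 2"

definition row_syms :: "nat \<Rightarrow> array \<Rightarrow> nat \<Rightarrow> nat set" where
  "row_syms n A i = {A i j | j. j < n}"

definition col_syms :: "nat \<Rightarrow> array \<Rightarrow> nat \<Rightarrow> nat set" where
  "col_syms n A j = {A i j | i. i < n}"

definition Psi :: "nat \<Rightarrow> array \<Rightarrow> nat \<Rightarrow> nat \<Rightarrow> nat set" where
  "Psi n A i j = symbols n A - {A k l | k l. k < n \<and> l < n \<and> k \<noteq> i \<and> l \<noteq> j}"

definition focused :: "nat \<Rightarrow> array \<Rightarrow> bool" where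
  "focused n A \<longleftrightarrow> latin n A \<and>
     (\<forall>i<n. \<forall>j<n. is_singleton n A (A i j) \<longrightarrow>
        (\<forall>l<n. is_singleton n A (A i l)) \<or> (\<forall>k<n. is_singleton n A (A k j))) \<and>
     (\<exists>i<n. \<exists>j<n. card (Psi n A i j) = 2 * n - 1)"

definition in_ML :: "real \<Rightarrow> nat \<Rightarrow> array \<Rightarrow> bool" where
  "in_ML \<alpha> n A \<longleftrightarrow> latin n A \<and> transversal_free n A \<and>
     real (card (symbols n A)) \<ge> \<alpha> * real (n * n)"

definition in_MLstar :: "real \<Rightarrow> nat \<Rightarrow> array \<Rightarrow> bool" where
  "in_MLstar \<alpha> n A \<longleftrightarrow> in_ML \<alpha> n A \<and>
     (\<forall>m B. in_ML \<alpha> m B \<longrightarrow> n \<le> m) \<and>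
     (\<forall>B. in_ML \<alpha> n B \<longrightarrow> card (symbols n B) \<le> card (symbols n A))"

end

(* If a singleton M_ij has clones both in its row and in its column, delete row i and column j:
   any transversal of the reduced array extends through the singleton, so by minimality of n the
   reduced array has fewer than alpha (n-1)^2 symbols, i.e. more than alpha (2n-1) symbols of M
   occur only in row i or column j.  One of these two lines carries at least alpha n of them, and
   those meet the perpendicular line through a clone only in that clone.

   Otherwise every singleton lies in a line consisting of singletons, and since M is not focused no
   such row meets such a column; up to transposition every singleton lies in a row of singletons.
   If there are at least alpha n - 1 such rows, a clone row k together with any column j works: the
   entries of column j in the singleton rows are singletons and so avoid row k.  If there are fewer,
   double counting over the remaining rows W gives a cell with |R_k \<inter> C_j| <= (1 - alpha) n + 1:
   summing |R_k \<inter> C_j| over their cells gives the sum of the squared multiplicities o of their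
   symbols, and 2 <= o <= |W|. *)

theory Submission
  imports Defs
begin

lemma finite_cells [simp]: "finite (cells n)"
  by (simp add: cells_def)

lemma symbols_eq_image: "symbols n A = (\<lambda>(i, j). A i j) ` cells n"
  unfolding symbols_def cells_def by fastforce

lemma finite_symbols [simp]: "finite (symbols n A)"
  by (simp add: symbols_eq_image)

lemma row_syms_eq_image: "row_syms n A i = A i ` {..<n}"
  unfolding row_syms_def by auto

lemma col_syms_eq_image: "col_syms n A j = (\<lambda>i. A i j) ` {..<n}"
  unfolding col_syms_def by auto

lemma finite_row_syms [simp]: "finite (row_syms n A i)"
  by (simp add: row_syms_eq_image)

lemma finite_col_syms [simp]: "finite (col_syms n A j)"
  by (simp add: col_syms_eq_image)

lemma latin_row_inj: "latin n A \<Longrightarrow> i < n \<Longrightarrow> inj_on (A i) {..<n}"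
  unfolding latin_def inj_on_def by blast

lemma latin_col_inj: "latin n A \<Longrightarrow> j < n \<Longrightarrow> inj_on (\<lambda>i. A i j) {..<n}"
  unfolding latin_def inj_on_def by blast

lemma card_row_syms: "latin n A \<Longrightarrow> i < n \<Longrightarrow> card (row_syms n A i) = n"
  by (simp add: row_syms_eq_image card_image latin_row_inj)

lemma card_col_syms: "latin n A \<Longrightarrow> j < n \<Longrightarrow> card (col_syms n A j) = n"
  by (simp add: col_syms_eq_image card_image latin_col_inj)

lemma card_row_syms_Un_col_syms:
  assumes "latin n A" "i < n" "j < n"
  shows "card (row_syms n A i \<union> col_syms n A j) + card (row_syms n A i \<inter> col_syms n A j) = 2 * n"
  using card_Un_Int[of "row_syms n A i" "col_syms n A j"] assms
  by (simp add: card_row_syms card_col_syms)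

lemma card_Un_ge_if_Int_subset_singleton:
  assumes "finite S" "finite U" "X \<subseteq> U" "S \<inter> X \<subseteq> {x}"
  shows "card S + card X \<le> card (S \<union> U) + 1"
proof -
  have "finite X"
    using assms(2,3) finite_subset by blast
  have "card (S \<inter> X) \<le> 1"
    using card_mono[OF _ assms(4)] by simp
  then have "card S + card X \<le> card (S \<union> X) + 1"
    using card_Un_Int[OF assms(1) \<open>finite X\<close>] by linarith
  also have "card (S \<union> X) \<le> card (S \<union> U)"
    using assms by (intro card_mono) auto
  finally show ?thesis
    by simp
qed

lemma finite_occurrence_set [simp]: "finite {(i, j) \<in> cells n. A i j = s}"
  by (rule finite_subset[of _ "cells n"]) (auto simp: cells_def)

lemma occurrences_pos: "i < n \<Longrightarrow> j < n \<Longrightarrow> 0 < occurrences n A (A i j)"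
  unfolding occurrences_def by (simp add: card_gt_0_iff) (auto simp: cells_def)

lemma is_clone_iff_not_singleton:
  "i < n \<Longrightarrow> j < n \<Longrightarrow> is_clone n A (A i j) \<longleftrightarrow> \<not> is_singleton n A (A i j)"
  using occurrences_pos[of i n j A] unfolding is_clone_def is_singleton_def by linarith

lemma singleton_cell_unique:
  assumes "is_singleton n A (A i j)" "i < n" "j < n" "k < n" "l < n" "A k l = A i j"
  shows "k = i \<and> l = j"
proof -
  obtain z where "{(a, b) \<in> cells n. A a b = A i j} = {z}"
    using assms(1) unfolding is_singleton_def occurrences_def by (rule card_1_singletonE)
  moreover have "(i, j) \<in> {(a, b) \<in> cells n. A a b = A i j}" "(k, l) \<in> {(a, b) \<in> cells n. A a b = A i j}"
    using assms by (auto simp: cells_def)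
  ultimately show ?thesis by auto
qed

lemma transversal_free_order_pos: "transversal_free n A \<Longrightarrow> 0 < n"
proof (rule ccontr)
  assume "transversal_free n A" "\<not> 0 < n"
  moreover from \<open>\<not> 0 < n\<close> have "is_transversal n A {}"
    by (simp add: is_transversal_def)
  ultimately show False
    unfolding transversal_free_def by blast
qed

lemma occurrences_eq_card_rows:
  assumes "latin n A"
  shows "occurrences n A s = card {i. i < n \<and> s \<in> row_syms n A i}"
proof -
  have inj: "inj_on fst {(i, j) \<in> cells n. A i j = s}"
    using latin_row_inj[OF assms] unfolding inj_on_def cells_def by (simp add: split_beta) blast
  have img: "fst ` {(i, j) \<in> cells n. A i j = s} = {i. i < n \<and> s \<in> row_syms n A i}"
    unfolding cells_def row_syms_def by force
  show ?thesis
    unfolding occurrences_def img[symmetric] using card_image[OF inj] by simp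
qed

definition transpose_array :: "array \<Rightarrow> array" where
  "transpose_array A i j = A j i"

lemma latin_transpose_array [simp]: "latin n (transpose_array A) \<longleftrightarrow> latin n A"
  unfolding latin_def transpose_array_def by blast

lemma symbols_transpose_array [simp]: "symbols n (transpose_array A) = symbols n A"
  unfolding symbols_def transpose_array_def by blast

lemma row_syms_transpose_array [simp]: "row_syms n (transpose_array A) i = col_syms n A i"
  unfolding row_syms_def col_syms_def transpose_array_def ..

lemma col_syms_transpose_array [simp]: "col_syms n (transpose_array A) j = row_syms n A j"
  unfolding row_syms_def col_syms_def transpose_array_def ..

lemma occurrences_transpose_array [simp]:
  "occurrences n (transpose_array A) s = occurrences n A s"
proof -
  have "{(i, j) \<in> cells n. transpose_array A i j = s} = prod.swap ` {(i, j) \<in> cells n. A i j = s}"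
    unfolding transpose_array_def cells_def by force
  then show ?thesis
    unfolding occurrences_def by (simp add: card_image)
qed

lemma is_singleton_transpose_array [simp]:
  "is_singleton n (transpose_array A) s \<longleftrightarrow> is_singleton n A s"
  by (simp add: is_singleton_def)

lemma is_clone_transpose_array [simp]: "is_clone n (transpose_array A) s \<longleftrightarrow> is_clone n A s"
  by (simp add: is_clone_def)

definition skip_index :: "nat \<Rightarrow> nat \<Rightarrow> nat" where
  "skip_index a k = (if k < a then k else Suc k)"

lemma skip_index_less: "k < n - 1 \<Longrightarrow> a < n \<Longrightarrow> skip_index a k < n"
  unfolding skip_index_def by auto

lemma skip_index_neq: "skip_index a k \<noteq> a"
  unfolding skip_index_def by auto

lemma skip_index_eq_iff [simp]: "skip_index a k = skip_index a k' \<longleftrightarrow> k = k'"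
  unfolding skip_index_def by auto

lemma skip_index_surj: "m < n \<Longrightarrow> m \<noteq> a \<Longrightarrow> a < n \<Longrightarrow> \<exists>k<n - 1. skip_index a k = m"
  unfolding skip_index_def by (rule exI[of _ "if m < a then m else m - 1"]) auto

definition delete_row_col :: "nat \<Rightarrow> nat \<Rightarrow> array \<Rightarrow> array" where
  "delete_row_col i j A p q = A (skip_index i p) (skip_index j q)"

lemma mem_Psi_iff:
  "s \<in> Psi n A i j \<longleftrightarrow> s \<in> symbols n A \<and> (\<forall>k<n. \<forall>l<n. A k l = s \<longrightarrow> k = i \<or> l = j)"
  unfolding Psi_def by blast

lemma Psi_subset_row_syms_Un_col_syms: "Psi n A i j \<subseteq> row_syms n A i \<union> col_syms n A j"
  unfolding Psi_def row_syms_def col_syms_def symbols_def by blast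

lemma Psi_transpose_array [simp]: "Psi n (transpose_array A) j i = Psi n A i j"
  unfolding Psi_def symbols_transpose_array unfolding transpose_array_def by blast

lemma card_Psi_Int_row_syms_bound:
  assumes "latin n A" "i < n" "j' < n" "j' \<noteq> j"
  shows "n + card (Psi n A i j \<inter> row_syms n A i) \<le> card (row_syms n A i \<union> col_syms n A j') + 1"
proof -
  have "col_syms n A j' \<inter> (Psi n A i j \<inter> row_syms n A i) \<subseteq> {A i j'}"
  proof
    fix s assume "s \<in> col_syms n A j' \<inter> (Psi n A i j \<inter> row_syms n A i)"
    then obtain k where "k < n" "s = A k j'" "s \<in> Psi n A i j"
      by (auto simp: col_syms_def)
    then show "s \<in> {A i j'}"
      using assms(3,4) by (auto simp: mem_Psi_iff)
  qed
  then have "card (col_syms n A j') + card (Psi n A i j \<inter> row_syms n A i)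
      \<le> card (col_syms n A j' \<union> row_syms n A i) + 1"
    by (intro card_Un_ge_if_Int_subset_singleton) auto
  then show ?thesis
    using card_col_syms[OF assms(1,3)] by (simp add: Un_commute)
qed

lemma card_Psi_Int_col_syms_bound:
  assumes "latin n A" "j < n" "i' < n" "i' \<noteq> i"
  shows "n + card (Psi n A i j \<inter> col_syms n A j) \<le> card (row_syms n A i' \<union> col_syms n A j) + 1"
  using card_Psi_Int_row_syms_bound[of n "transpose_array A" j i' i] assms by (simp add: Un_commute)

lemma symbols_delete_row_col:
  assumes "i < n" "j < n"
  shows "symbols (n - 1) (delete_row_col i j A) = symbols n A - Psi n A i j"
proof -
  have "symbols (n - 1) (delete_row_col i j A) = {A k l | k l. k < n \<and> l < n \<and> k \<noteq> i \<and> l \<noteq> j}"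
  proof
    show "symbols (n - 1) (delete_row_col i j A) \<subseteq> {A k l | k l. k < n \<and> l < n \<and> k \<noteq> i \<and> l \<noteq> j}"
      unfolding symbols_def delete_row_col_def using assms skip_index_less skip_index_neq by blast
    show "{A k l | k l. k < n \<and> l < n \<and> k \<noteq> i \<and> l \<noteq> j} \<subseteq> symbols (n - 1) (delete_row_col i j A)"
    proof clarify
      fix k l assume "k < n" "l < n" "k \<noteq> i" "l \<noteq> j"
      then obtain p q where "p < n - 1" "skip_index i p = k" "q < n - 1" "skip_index j q = l"
        using assms skip_index_surj by metis
      then show "A k l \<in> symbols (n - 1) (delete_row_col i j A)"
        unfolding symbols_def delete_row_col_def by blast
    qed
  qed
  then show ?thesis
    unfolding Psi_def symbols_def by blast
qed

lemma latin_delete_row_col: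
  "latin n A \<Longrightarrow> i < n \<Longrightarrow> j < n \<Longrightarrow> latin (n - 1) (delete_row_col i j A)"
  unfolding latin_def delete_row_col_def by (metis skip_index_eq_iff skip_index_less)

lemma is_transversal_iff_pairwise:
  "is_transversal n A T \<longleftrightarrow> T \<subseteq> cells n \<and> card T = n \<and>
     pairwise (\<lambda>(i, j) (k, l). i \<noteq> k \<and> j \<noteq> l \<and> A i j \<noteq> A k l) T"
  unfolding is_transversal_def pairwise_def by (simp add: case_prod_unfold prod_eq_iff)

lemma transversal_free_delete_row_col:
  assumes "transversal_free n A" "i < n" "j < n" "is_singleton n A (A i j)"
  shows "transversal_free (n - 1) (delete_row_col i j A)"
  unfolding transversal_free_def
proof
  let ?R = "\<lambda>A (a, b) (c, d). a \<noteq> c \<and> b \<noteq> d \<and> A a b \<noteq> (A c d :: nat)"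
  assume "\<exists>T. is_transversal (n - 1) (delete_row_col i j A) T"
  then obtain T where T: "T \<subseteq> cells (n - 1)" "card T = n - 1"
    "pairwise (?R (delete_row_col i j A)) T"
    by (auto simp: is_transversal_iff_pairwise)
  define f where "f = (\<lambda>(p, q). (skip_index i p, skip_index j q))"
  have "inj_on f T"
    unfolding f_def by (auto intro: inj_onI)
  then have card_image: "card (f ` T) = n - 1"
    using T(2) by (simp add: card_image)
  have image_cells: "f ` T \<subseteq> cells n"
    using T(1) assms(2,3) by (auto simp: f_def cells_def skip_index_less)
  have "pairwise (?R A) (f ` T)"
    unfolding pairwise_image
    using T(3) by (rule pairwise_mono) (auto simp: f_def delete_row_col_def)
  moreover have "?R A (i, j) y \<and> ?R A y (i, j)" if "y \<in> f ` T" for y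
  proof -
    obtain p q where y: "y = (p, q)" "p \<noteq> i" "q \<noteq> j"
      using \<open>y \<in> f ` T\<close> by (auto simp: f_def skip_index_neq)
    moreover have "p < n" "q < n"
      using image_cells \<open>y \<in> f ` T\<close> y by (auto simp: cells_def)
    ultimately have "A p q \<noteq> A i j"
      using singleton_cell_unique[OF assms(4,2,3)] by blast
    then show ?thesis
      using y by auto
  qed
  moreover have "(i, j) \<notin> f ` T"
    unfolding f_def by (auto dest: sym simp: skip_index_neq)
  ultimately have "is_transversal n A (insert (i, j) (f ` T))"
    using image_cells card_image assms(2,3) finite_subset[OF image_cells]
    by (auto simp: is_transversal_iff_pairwise pairwise_insert cells_def)
  then show False
    using assms(1) unfolding transversal_free_def by blast
qed

abbreviation has_wide_clone :: "real \<Rightarrow> nat \<Rightarrow> array \<Rightarrow> bool" where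
  "has_wide_clone \<alpha> n M \<equiv> \<exists>i<n. \<exists>j<n. is_clone n M (M i j) \<and>
     real (card (row_syms n M i \<union> col_syms n M j)) \<ge> (\<alpha> + 1) * real n - 1"

lemma card_Psi_gt_of_MLstar:
  assumes "in_MLstar \<alpha> n M" "i < n" "j < n" "is_singleton n M (M i j)"
  shows "\<alpha> * (2 * real n - 1) < real (card (Psi n M i j))"
proof -
  from assms(1) have latin: "latin n M" and tf: "transversal_free n M"
    and dense: "\<alpha> * real (n * n) \<le> real (card (symbols n M))"
    and minimal: "\<And>m B. in_ML \<alpha> m B \<Longrightarrow> n \<le> m"
    unfolding in_MLstar_def in_ML_def by auto
  let ?B = "delete_row_col i j M"
  have "\<not> in_ML \<alpha> (n - 1) ?B"
    using minimal assms(2) by fastforce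
  then have small: "real (card (symbols (n - 1) ?B)) < \<alpha> * real ((n - 1) * (n - 1))"
    using latin_delete_row_col[OF latin assms(2,3)] transversal_free_delete_row_col[OF tf assms(2-4)]
    unfolding in_ML_def by linarith
  have "Psi n M i j \<subseteq> symbols n M"
    by (auto simp: Psi_def)
  then have card_B: "real (card (symbols (n - 1) ?B)) = real (card (symbols n M)) - real (card (Psi n M i j))"
    unfolding symbols_delete_row_col[OF assms(2,3)]
    by (simp add: card_Diff_subset finite_subset card_mono of_nat_diff)
  have n_minus_1: "real (n - 1) = real n - 1"
    using assms(2) by (simp add: of_nat_diff)
  from small have "real (card (symbols n M)) - real (card (Psi n M i j))
      < \<alpha> * ((real n - 1) * (real n - 1))"
    unfolding card_B of_nat_mult n_minus_1 .
  moreover have "\<alpha> * (real n * real n) - \<alpha> * ((real n - 1) * (real n - 1)) = \<alpha> * (2 * real n - 1)"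
    by (simp add: algebra_simps)
  ultimately show ?thesis
    using dense by simp
qed

lemma wide_clone_of_singleton_between_clones:
  assumes MLstar: "in_MLstar \<alpha> n M" and "\<alpha> \<le> 1"
    and singleton: "i < n" "j < n" "is_singleton n M (M i j)"
    and row_clone: "j' < n" "is_clone n M (M i j')"
    and col_clone: "i' < n" "is_clone n M (M i' j)"
  shows "has_wide_clone \<alpha> n M"
proof -
  have latin: "latin n M"
    using MLstar by (simp add: in_MLstar_def in_ML_def)
  define X where "X = Psi n M i j \<inter> row_syms n M i"
  define Y where "Y = Psi n M i j \<inter> col_syms n M j"
  have "X \<union> Y = Psi n M i j"
    using Psi_subset_row_syms_Un_col_syms unfolding X_def Y_def by blast
  moreover have "M i j \<in> X \<inter> Y"
    using singleton singleton_cell_unique[OF singleton(3,1,2)]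
    by (auto simp: X_def Y_def mem_Psi_iff row_syms_def col_syms_def symbols_def)
  moreover have "finite (Psi n M i j)"
    by (simp add: Psi_def)
  ultimately have "card (Psi n M i j) + 1 \<le> card X + card Y"
    using card_Un_Int[of X Y] card_mono[of "X \<inter> Y" "{M i j}"]
    by (simp add: X_def Y_def)
  then have "2 * (\<alpha> * real n) < real (card X) + real (card Y)"
    using card_Psi_gt_of_MLstar[OF MLstar singleton] \<open>\<alpha> \<le> 1\<close> by (simp add: algebra_simps)
  moreover have "j' \<noteq> j" "i' \<noteq> i"
    using row_clone col_clone singleton by (auto simp: is_clone_def is_singleton_def)
  then have "n + card X \<le> card (row_syms n M i \<union> col_syms n M j') + 1"
    "n + card Y \<le> card (row_syms n M i' \<union> col_syms n M j) + 1"
    unfolding X_def Y_def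
    using card_Psi_Int_row_syms_bound[OF latin singleton(1) row_clone(1)]
      card_Psi_Int_col_syms_bound[OF latin singleton(2) col_clone(1)] by blast+
  ultimately consider
      "(\<alpha> + 1) * real n - 1 \<le> real (card (row_syms n M i \<union> col_syms n M j'))"
    | "(\<alpha> + 1) * real n - 1 \<le> real (card (row_syms n M i' \<union> col_syms n M j))"
    by (simp add: algebra_simps) linarith
  then show ?thesis
    using singleton(1,2) row_clone col_clone by cases blast+
qed

lemma occurrences_eq_card_cols:
  "latin n A \<Longrightarrow> occurrences n A s = card {j. j < n \<and> s \<in> col_syms n A j}"
  using occurrences_eq_card_rows[of n "transpose_array A" s] by simp

lemma occurrences_le_card_closed_rows:
  assumes "latin n A" "finite W" and closed: "\<And>a b. a < n \<Longrightarrow> b < n \<Longrightarrow> A a b = s \<Longrightarrow> a \<in> W"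
  shows "occurrences n A s \<le> card W"
  unfolding occurrences_eq_card_rows[OF assms(1)]
  using assms(2) closed by (intro card_mono) (auto simp: row_syms_def)

lemma sum_card_row_syms_Int_col_syms:
  assumes "latin n A" "k < n"
  shows "(\<Sum>j<n. card (row_syms n A k \<inter> col_syms n A j)) = (\<Sum>l<n. occurrences n A (A k l))"
proof -
  have "(\<Sum>j<n. card (row_syms n A k \<inter> col_syms n A j))
      = (\<Sum>j<n. \<Sum>s\<in>row_syms n A k. of_bool (s \<in> col_syms n A j))"
    by (simp add: Collect_mem_eq)
  also have "\<dots> = (\<Sum>s\<in>row_syms n A k. \<Sum>j<n. of_bool (s \<in> col_syms n A j))"
    by (rule sum.swap)
  also have "\<dots> = (\<Sum>s\<in>row_syms n A k. occurrences n A s)"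
    using occurrences_eq_card_cols[OF assms(1)] by (simp add: Int_def)
  also have "\<dots> = (\<Sum>l<n. occurrences n A (A k l))"
    unfolding row_syms_eq_image by (simp add: sum.reindex latin_row_inj[OF assms])
  finally show ?thesis .
qed

lemma sum_inverse_occurrences:
  assumes "L \<subseteq> cells n"
    and closed: "\<And>a b c d. (a, b) \<in> L \<Longrightarrow> (c, d) \<in> cells n \<Longrightarrow> A c d = A a b \<Longrightarrow> (c, d) \<in> L"
  shows "(\<Sum>(a, b)\<in>L. 1 / real (occurrences n A (A a b))) = real (card ((\<lambda>(a, b). A a b) ` L))"
proof -
  let ?g = "\<lambda>(a, b). A a b"
  have fibre: "{x \<in> L. ?g x = A a b} = {(c, d) \<in> cells n. A c d = A a b}" if "(a, b) \<in> L" for a b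
    using assms(1) closed[OF that] by auto
  have "(\<Sum>(a, b)\<in>L. 1 / real (occurrences n A (A a b)))
      = (\<Sum>s\<in>?g ` L. \<Sum>(a, b)\<in>{x \<in> L. ?g x = s}. 1 / real (occurrences n A (A a b)))"
    using finite_subset[OF assms(1)] by (rule sum.image_gen) simp
  also have "\<dots> = (\<Sum>s\<in>?g ` L. 1)"
  proof (rule sum.cong [OF refl])
    fix s assume "s \<in> ?g ` L"
    then obtain a b where ab: "(a, b) \<in> L" "s = A a b"
      by auto
    then have "0 < occurrences n A s"
      using assms(1) occurrences_pos[of a n b A] by (auto simp: cells_def)
    moreover have "(\<Sum>(a, b)\<in>{x \<in> L. ?g x = s}. 1 / real (occurrences n A (A a b)))
        = (\<Sum>x\<in>{x \<in> L. ?g x = s}. 1 / real (occurrences n A s))"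
      by (rule sum.cong) auto
    moreover have "card {x \<in> L. ?g x = s} = occurrences n A s"
      unfolding ab(2) fibre[OF ab(1)] occurrences_def ..
    ultimately show "(\<Sum>(a, b)\<in>{x \<in> L. ?g x = s}. 1 / real (occurrences n A (A a b))) = 1"
      by simp
  qed
  finally show ?thesis
    by simp
qed

lemma sum_le_bounds_sum_inverse:
  fixes f :: "'a \<Rightarrow> real"
  assumes "0 < a" and bounds: "\<And>x. x \<in> S \<Longrightarrow> a \<le> f x" "\<And>x. x \<in> S \<Longrightarrow> f x \<le> b"
  shows "sum f S \<le> (a + b) * real (card S) - a * b * (\<Sum>x\<in>S. 1 / f x)"
proof -
  have "f x \<le> a + b - a * b * (1 / f x)" if "x \<in> S" for x
  proof -
    have "0 \<le> (f x - a) * (b - f x)"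
      using bounds[OF that] by simp
    then have "a * b \<le> (a + b - f x) * f x"
      by (simp add: algebra_simps)
    then have "a * b / f x \<le> a + b - f x"
      using \<open>0 < a\<close> bounds(1)[OF that] by (simp add: pos_divide_le_eq)
    then show ?thesis
      by simp
  qed
  then have "sum f S \<le> (\<Sum>x\<in>S. a + b - a * b * (1 / f x))"
    by (rule sum_mono)
  also have "\<dots> = (a + b) * real (card S) - a * b * (\<Sum>x\<in>S. 1 / f x)"
    by (simp add: sum_subtractf sum_distrib_left)
  finally show ?thesis .
qed

lemma exists_le_of_sum_le:
  fixes f :: "'a \<Rightarrow> real"
  assumes "finite S" "S \<noteq> {}" "sum f S \<le> real (card S) * c"
  shows "\<exists>x\<in>S. f x \<le> c"
proof (rule ccontr)
  assume "\<not> ?thesis"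
  then have "sum (\<lambda>_. c) S < sum f S"
    using assms(1,2) by (intro sum_strict_mono) auto
  then show False
    using assms(3) by simp
qed

(* Each multiplicity o in [2, |W|] satisfies o <= 2 + |W| - 2 |W| / o, and the reciprocals of the
   multiplicities sum to the number of distinct symbols. *)
lemma exists_small_row_col_Int:
  assumes latin: "latin n A"
    and W: "W \<subseteq> {..<n}" "W \<noteq> {}"
    and closed: "\<And>k j a b. k \<in> W \<Longrightarrow> j < n \<Longrightarrow> a < n \<Longrightarrow> b < n \<Longrightarrow> A a b = A k j \<Longrightarrow> a \<in> W"
    and clones: "\<And>k j. k \<in> W \<Longrightarrow> j < n \<Longrightarrow> is_clone n A (A k j)"
  shows "\<exists>k\<in>W. \<exists>j<n. real (card (row_syms n A k \<inter> col_syms n A j))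
           \<le> real (card W) + 2 - 2 * real (card ((\<lambda>(a, b). A a b) ` (W \<times> {..<n}))) / real n"
proof -
  define L where "L = W \<times> {..<n}"
  define K where "K = real (card W)"
  define N where "N = real (card ((\<lambda>(a, b). A a b) ` L))"
  define occ where "occ = (\<lambda>(a, b). real (occurrences n A (A a b)))"
  have "finite W"
    using finite_subset[OF W(1)] by simp
  have "0 < n"
    using W by auto
  with \<open>finite W\<close> have "finite L" and card_L: "real (card L) = K * real n"
    by (simp_all add: L_def K_def card_cartesian_product)
  have L_cells: "L \<subseteq> cells n"
    using W by (auto simp: L_def cells_def)
  have occ_bounds: "2 \<le> occ x" "occ x \<le> K" if "x \<in> L" for x
  proof -
    obtain k j where x: "x = (k, j)" "k \<in> W" "j < n"
      using \<open>x \<in> L\<close> by (auto simp: L_def)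
    have "occurrences n A (A k j) \<le> card W"
      using occurrences_le_card_closed_rows[OF latin \<open>finite W\<close>] closed[OF x(2,3)] by blast
    then show "2 \<le> occ x" "occ x \<le> K"
      using clones[OF x(2,3)] by (simp_all add: x occ_def K_def is_clone_def)
  qed
  have "(\<Sum>(k, j)\<in>L. real (card (row_syms n A k \<inter> col_syms n A j))) = (\<Sum>x\<in>L. occ x)"
    using sum_card_row_syms_Int_col_syms[OF latin] W
    by (simp add: L_def occ_def sum.cartesian_product[symmetric] subset_eq flip: of_nat_sum)
  also have "\<dots> \<le> (2 + K) * real (card L) - 2 * K * (\<Sum>x\<in>L. 1 / occ x)"
    using occ_bounds by (intro sum_le_bounds_sum_inverse) auto
  also have "(\<Sum>x\<in>L. 1 / occ x) = N"
  proof -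
    have "(c, d) \<in> L" if "(a, b) \<in> L" "(c, d) \<in> cells n" "A c d = A a b" for a b c d
      using that closed[of a b c d] by (auto simp: L_def cells_def)
    then have "(\<Sum>(a, b)\<in>L. 1 / real (occurrences n A (A a b))) = N"
      unfolding N_def using L_cells by (rule sum_inverse_occurrences[rotated])
    then show ?thesis
      by (simp add: occ_def case_prod_unfold)
  qed
  also have "(2 + K) * real (card L) - 2 * K * N = real (card L) * (K + 2 - 2 * N / real n)"
    using card_L \<open>0 < n\<close> by (simp add: field_simps)
  finally have "(\<Sum>(k, j)\<in>L. real (card (row_syms n A k \<inter> col_syms n A j)))
      \<le> real (card L) * (K + 2 - 2 * N / real n)" .
  moreover have "L \<noteq> {}"
    using W(2) \<open>0 < n\<close> by (auto simp: L_def)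
  ultimately obtain x where "x \<in> L"
    "(\<lambda>(k, j). real (card (row_syms n A k \<inter> col_syms n A j))) x \<le> K + 2 - 2 * N / real n"
    using exists_le_of_sum_le[OF \<open>finite L\<close>] by blast
  then show ?thesis
    unfolding L_def K_def N_def by auto
qed

lemma card_symbols_le_split_rows:
  assumes "I \<subseteq> {..<n}"
  shows "card (symbols n A) \<le> card ((\<lambda>(a, b). A a b) ` (({..<n} - I) \<times> {..<n})) + card I * n"
proof -
  let ?g = "\<lambda>(a, b). A a b"
  have "finite I"
    using assms finite_subset by blast
  have "symbols n A \<subseteq> ?g ` (({..<n} - I) \<times> {..<n}) \<union> ?g ` (I \<times> {..<n})"
  proof
    fix s assume "s \<in> symbols n A"
    then obtain a b where "(a, b) \<in> ({..<n} - I) \<times> {..<n} \<union> I \<times> {..<n}" "s = ?g (a, b)"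
      unfolding symbols_def by auto
    then show "s \<in> ?g ` (({..<n} - I) \<times> {..<n}) \<union> ?g ` (I \<times> {..<n})"
      by blast
  qed
  then have "card (symbols n A) \<le> card (?g ` (({..<n} - I) \<times> {..<n}) \<union> ?g ` (I \<times> {..<n}))"
    using \<open>finite I\<close> by (intro card_mono) auto
  also have "\<dots> \<le> card (?g ` (({..<n} - I) \<times> {..<n})) + card (?g ` (I \<times> {..<n}))"
    by (rule card_Un_le)
  also have "card (?g ` (I \<times> {..<n})) \<le> card I * n"
    using card_image_le[of "I \<times> {..<n}" ?g] \<open>finite I\<close> by (simp add: card_cartesian_product)
  finally show ?thesis
    by simp
qed

abbreviation all_singleton_row :: "nat \<Rightarrow> array \<Rightarrow> nat \<Rightarrow> bool" where
  "all_singleton_row n A i \<equiv> \<forall>l<n. is_singleton n A (A i l)"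

abbreviation all_singleton_col :: "nat \<Rightarrow> array \<Rightarrow> nat \<Rightarrow> bool" where
  "all_singleton_col n A j \<equiv> \<forall>k<n. is_singleton n A (A k j)"

lemma card_Psi_all_singleton_row_col:
  assumes latin: "latin n A" and "i < n" "j < n"
    and row: "all_singleton_row n A i" and col: "all_singleton_col n A j"
  shows "card (Psi n A i j) = 2 * n - 1"
proof -
  have "row_syms n A i \<union> col_syms n A j \<subseteq> Psi n A i j"
  proof
    fix s assume "s \<in> row_syms n A i \<union> col_syms n A j"
    then obtain k l where kl: "k < n" "l < n" "s = A k l" "is_singleton n A s" "k = i \<or> l = j"
      using row col \<open>i < n\<close> \<open>j < n\<close> by (auto simp: row_syms_def col_syms_def)
    then show "s \<in> Psi n A i j"
      using singleton_cell_unique[of n A k l] by (auto simp: mem_Psi_iff symbols_def)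
  qed
  moreover have "Psi n A i j \<subseteq> row_syms n A i \<union> col_syms n A j"
    unfolding Psi_def row_syms_def col_syms_def symbols_def by blast
  ultimately have "Psi n A i j = row_syms n A i \<union> col_syms n A j"
    by (rule subset_antisym[rotated])
  moreover have "row_syms n A i \<inter> col_syms n A j = {A i j}"
  proof
    show "row_syms n A i \<inter> col_syms n A j \<subseteq> {A i j}"
    proof
      fix s assume "s \<in> row_syms n A i \<inter> col_syms n A j"
      then obtain k l where "k < n" "l < n" "s = A i l" "s = A k j"
        by (auto simp: row_syms_def col_syms_def)
      then show "s \<in> {A i j}"
        using singleton_cell_unique[of n A i l k j] row \<open>i < n\<close> \<open>j < n\<close> by auto
    qed
  qed (use \<open>i < n\<close> \<open>j < n\<close> in \<open>auto simp: row_syms_def col_syms_def\<close>)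
  ultimately show ?thesis
    using card_row_syms_Un_col_syms[OF assms(1-3)] by simp
qed

lemma card_row_Un_col_ge_all_singleton_rows:
  assumes latin: "latin n A" and "k < n" "\<not> all_singleton_row n A k" "j < n"
  shows "n + card {i. i < n \<and> all_singleton_row n A i} \<le> card (row_syms n A k \<union> col_syms n A j)"
proof -
  define I where "I = {i. i < n \<and> all_singleton_row n A i}"
  have "I \<subseteq> {..<n}"
    by (auto simp: I_def)
  then have card_image: "card ((\<lambda>i. A i j) ` I) = card I"
    using latin_col_inj[OF latin \<open>j < n\<close>] by (simp add: card_image inj_on_subset)
  have "row_syms n A k \<inter> (\<lambda>i. A i j) ` I = {}"
  proof (rule ccontr)
    assume "row_syms n A k \<inter> (\<lambda>i. A i j) ` I \<noteq> {}"
    then obtain l i where "l < n" "i \<in> I" "A k l = A i j"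
      unfolding row_syms_def by blast
    then have "k = i"
      using singleton_cell_unique[of n A i j k l] \<open>k < n\<close> \<open>j < n\<close> by (auto simp: I_def)
    then show False
      using \<open>i \<in> I\<close> assms(3) by (simp add: I_def)
  qed
  then have "card (row_syms n A k \<union> (\<lambda>i. A i j) ` I) = n + card I"
    using finite_subset[OF \<open>I \<subseteq> {..<n}\<close>]
    by (simp add: card_Un_disjoint card_row_syms[OF latin \<open>k < n\<close>] card_image)
  moreover have "(\<lambda>i. A i j) ` I \<subseteq> col_syms n A j"
    by (auto simp: I_def col_syms_def)
  then have "card (row_syms n A k \<union> (\<lambda>i. A i j) ` I) \<le> card (row_syms n A k \<union> col_syms n A j)"
    by (intro card_mono) auto
  ultimately show ?thesis
    by (simp add: I_def)
qed

lemma wide_clone_of_closed_clone_rows: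
  assumes latin: "latin n A" and dense: "\<alpha> * real (n * n) \<le> real (card (symbols n A))"
    and "I \<subseteq> {..<n}" and few: "real (card I) < \<alpha> * real n - 1"
    and W: "W = {..<n} - I" "W \<noteq> {}"
    and closed: "\<And>k j a b. k \<in> W \<Longrightarrow> j < n \<Longrightarrow> a < n \<Longrightarrow> b < n \<Longrightarrow> A a b = A k j \<Longrightarrow> a \<in> W"
    and clones: "\<And>k j. k \<in> W \<Longrightarrow> j < n \<Longrightarrow> is_clone n A (A k j)"
  shows "has_wide_clone \<alpha> n A"
proof -
  let ?N = "card ((\<lambda>(a, b). A a b) ` (W \<times> {..<n}))"
  have "0 < n"
    using W by auto
  obtain k j where kj: "k \<in> W" "j < n"
    "real (card (row_syms n A k \<inter> col_syms n A j)) \<le> real (card W) + 2 - 2 * real ?N / real n"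
    using exists_small_row_col_Int[OF latin _ W(2)] W(1) closed clones by blast
  have "real (card (symbols n A)) \<le> real (?N + card I * n)"
    unfolding W(1) of_nat_le_iff using \<open>I \<subseteq> {..<n}\<close> by (rule card_symbols_le_split_rows)
  then have "(\<alpha> * real n - real (card I)) * real n \<le> real ?N"
    using dense by (simp add: algebra_simps)
  then have "\<alpha> * real n - real (card I) \<le> real ?N / real n"
    using \<open>0 < n\<close> by (simp add: pos_le_divide_eq)
  moreover have "real (card W) = real n - real (card I)"
    using \<open>I \<subseteq> {..<n}\<close> card_mono[of "{..<n}" I] finite_subset[of I "{..<n}"]
    by (simp add: W(1) card_Diff_subset of_nat_diff)
  ultimately have "real (card (row_syms n A k \<inter> col_syms n A j)) \<le> (1 - \<alpha>) * real n + 1"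
    using kj(3) few by (simp add: algebra_simps)
  moreover have "k < n"
    using kj(1) by (simp add: W(1))
  ultimately have "(\<alpha> + 1) * real n - 1 \<le> real (card (row_syms n A k \<union> col_syms n A j))"
    using card_row_syms_Un_col_syms[OF latin \<open>k < n\<close> kj(2)] by (simp add: algebra_simps)
  then show ?thesis
    using clones[OF kj(1,2)] \<open>k < n\<close> kj(2) by blast
qed

lemma wide_clone_of_singletons_in_rows:
  assumes latin: "latin n A" and dense: "\<alpha> * real (n * n) \<le> real (card (symbols n A))"
    and in_rows: "\<And>i j. i < n \<Longrightarrow> j < n \<Longrightarrow> is_singleton n A (A i j) \<Longrightarrow> all_singleton_row n A i"
    and "0 < n" and no_col: "\<And>j. j < n \<Longrightarrow> \<not> all_singleton_col n A j"
  shows "has_wide_clone \<alpha> n A"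
proof -
  define I where "I = {i. i < n \<and> all_singleton_row n A i}"
  define W where "W = {..<n} - I"
  have clones: "is_clone n A (A k j)" if "k \<in> W" "j < n" for k j
    using that in_rows[of k j] is_clone_iff_not_singleton[of k n j A] by (auto simp: W_def I_def)
  obtain k0 where "k0 < n" "\<not> is_singleton n A (A k0 0)"
    using no_col[OF \<open>0 < n\<close>] by blast
  then have "k0 \<in> W"
    unfolding W_def I_def using \<open>0 < n\<close> by blast
  show ?thesis
  proof (cases "\<alpha> * real n - 1 \<le> real (card I)")
    case True
    have "\<not> all_singleton_row n A k0"
      using \<open>k0 \<in> W\<close> \<open>k0 < n\<close> by (auto simp: W_def I_def)
    then have "n + card I \<le> card (row_syms n A k0 \<union> col_syms n A 0)"
      unfolding I_def by (rule card_row_Un_col_ge_all_singleton_rows[OF latin \<open>k0 < n\<close> _ \<open>0 < n\<close>])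
    then have "(\<alpha> + 1) * real n - 1 \<le> real (card (row_syms n A k0 \<union> col_syms n A 0))"
      using True by (simp add: algebra_simps)
    then show ?thesis
      using clones[OF \<open>k0 \<in> W\<close> \<open>0 < n\<close>] \<open>k0 < n\<close> \<open>0 < n\<close> by blast
  next
    case False
    have "a \<in> W" if "k \<in> W" "j < n" "a < n" "b < n" "A a b = A k j" for k j a b
    proof (rule ccontr)
      assume "a \<notin> W"
      then have "is_singleton n A (A k j)"
        using that by (auto simp: W_def I_def)
      then show False
        using clones[OF that(1,2)] by (simp add: is_clone_def is_singleton_def)
    qed
    moreover have "I \<subseteq> {..<n}" "W \<noteq> {}"
      using \<open>k0 \<in> W\<close> by (auto simp: I_def)
    ultimately show ?thesis
      using wide_clone_of_closed_clone_rows[OF latin dense _ _ W_def] False clones by auto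
  qed
qed

lemma wide_clone_of_singletons_in_cols:
  assumes "latin n A" and "\<alpha> * real (n * n) \<le> real (card (symbols n A))"
    and in_cols: "\<And>i j. i < n \<Longrightarrow> j < n \<Longrightarrow> is_singleton n A (A i j) \<Longrightarrow> all_singleton_col n A j"
    and "0 < n" and no_row: "\<And>i. i < n \<Longrightarrow> \<not> all_singleton_row n A i"
  shows "has_wide_clone \<alpha> n A"
proof -
  have "has_wide_clone \<alpha> n (transpose_array A)"
  proof (rule wide_clone_of_singletons_in_rows)
    show "all_singleton_row n (transpose_array A) i"
      if "i < n" "j < n" "is_singleton n (transpose_array A) (transpose_array A i j)" for i j
      using that in_cols[of j i] by (simp add: transpose_array_def)
    show "\<not> all_singleton_col n (transpose_array A) j" if "j < n" for j
      using that no_row[of j] by (simp add: transpose_array_def)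
  qed (use assms(1,2,4) in simp_all)
  then obtain i j where "i < n" "j < n" "is_clone n (transpose_array A) (transpose_array A i j)"
    "(\<alpha> + 1) * real n - 1 \<le>
       real (card (row_syms n (transpose_array A) i \<union> col_syms n (transpose_array A) j))"
    by blast
  moreover from this(3,4) have "is_clone n A (A j i)"
    "(\<alpha> + 1) * real n - 1 \<le> real (card (row_syms n A j \<union> col_syms n A i))"
    by (simp_all add: transpose_array_def Un_commute)
  ultimately show ?thesis
    by blast
qed

lemma wide_clone_of_singletons_in_lines:
  assumes latin: "latin n A" and dense: "\<alpha> * real (n * n) \<le> real (card (symbols n A))" and "0 < n"
    and in_lines: "\<And>i j. i < n \<Longrightarrow> j < n \<Longrightarrow> is_singleton n A (A i j) \<Longrightarrow>
      all_singleton_row n A i \<or> all_singleton_col n A j"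
    and Psi_small: "\<And>i j. i < n \<Longrightarrow> j < n \<Longrightarrow> card (Psi n A i j) \<noteq> 2 * n - 1"
  shows "has_wide_clone \<alpha> n A"
proof -
  have "(\<forall>i<n. \<not> all_singleton_row n A i) \<or> (\<forall>j<n. \<not> all_singleton_col n A j)"
    using card_Psi_all_singleton_row_col[OF latin] Psi_small by blast
  then show ?thesis
  proof
    assume "\<forall>i<n. \<not> all_singleton_row n A i"
    then show ?thesis
      using in_lines by (intro wide_clone_of_singletons_in_cols[OF latin dense _ \<open>0 < n\<close>]) auto
  next
    assume "\<forall>j<n. \<not> all_singleton_col n A j"
    then show ?thesis
      using in_lines by (intro wide_clone_of_singletons_in_rows[OF latin dense _ \<open>0 < n\<close>]) auto
  qed
qed

theorem mainTheorem11:
  fixes \<alpha> :: real and n :: nat and M :: array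
  assumes "1/2 \<le> \<alpha>" and "\<alpha> \<le> 1"
    and "in_MLstar \<alpha> n M"
    and "\<not> focused n M"
  shows "\<exists>i<n. \<exists>j<n. is_clone n M (M i j) \<and>
           real (card (row_syms n M i \<union> col_syms n M j)) \<ge> (\<alpha> + 1) * real n - 1"
proof -
  have latin: "latin n M" and dense: "\<alpha> * real (n * n) \<le> real (card (symbols n M))"
    and "0 < n"
    using assms(3) transversal_free_order_pos by (auto simp: in_MLstar_def in_ML_def)
  show ?thesis
  proof (cases "\<forall>i<n. \<forall>j<n. is_singleton n M (M i j) \<longrightarrow>
                  all_singleton_row n M i \<or> all_singleton_col n M j")
    case False
    then obtain i j j' i' where singleton: "i < n" "j < n" "is_singleton n M (M i j)"
      and "j' < n" "\<not> is_singleton n M (M i j')" "i' < n" "\<not> is_singleton n M (M i' j)"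
      by blast
    then have "is_clone n M (M i j')" "is_clone n M (M i' j)"
      by (simp_all add: is_clone_iff_not_singleton)
    with singleton \<open>j' < n\<close> \<open>i' < n\<close> show ?thesis
      using wide_clone_of_singleton_between_clones[OF assms(3,2)] by blast
  next
    case True
    moreover from this assms(4) latin have "\<forall>i<n. \<forall>j<n. card (Psi n M i j) \<noteq> 2 * n - 1"
      unfolding focused_def by blast
    ultimately show ?thesis
      by (intro wide_clone_of_singletons_in_lines[OF latin dense \<open>0 < n\<close>]) auto
  qed
qed

end
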